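(* Let $(X,d,\ll,\le,\tau)$ be a Lorentzian length space such that the metric space $(X,d)$ is locally compact. If $(X,d,\ll,\le,\tau)$ is stably causal, then it is strongly causal.
   Context: A causal space $(X,\ll,\le)$ is a set $X$ with two transitive relations $\ll,\le$ such that $\le$ is reflexive and $x\ll y\Rightarrow x\le y$; write $p<q$ if $p\le q$ and $p\neq q$. Set $I^+(x)=\{y: x\ll y\}$, $I^-(x)=\{y: y\ll x\}$, $J^+(x)=\{y:x\le y\}$, $J^-(x)=\{y:y\le x\}$. A Lorentzian pre-length space $(X,d,\ll,\le,\tau)$ is a causal space together with a metric $d$ on $X$ and a function $\tau:X\times X\to[0,\infty]$ that is lower semicontinuous with respect to the topology of $d$, satisfies $\tau(x,z)\ge\tau(x,y)+\tau(y,z)$ whenever $x\le y\le z$, $\tau(x,y)=0$ if $x\not\le y$, and $\tau(x,y)>0\iff x\ll y$. All topological notions refer to the metric topology of $d$. A future directed causal (resp. timelike) curve is a non-constant Lipschitz map $\gamma:I\to X$ ($I\subset\mathbb R$ an interval) with $\gamma(s)\le\gamma(t)$ (resp. $\gamma(s)\ll\gamma(t)$) for all $s<t$. For a future directed causal $\gamma:[a,b]\to X$, $L_\tau(\gamma)=\inf\sum_{i=0}^{N-1}\tau(\gamma(t_i),\gamma(t_{i+1}))$ over all partitions $a=t_0<\dots<t_N=b$. The space is causally path connected if whenever $x\le y$ (resp. $x\ll y$) there is a future directed causal (resp. timelike) curve from $x$ to $y$. For open $U\subset X$, $p\le_U q$ means there is a future directed causal curve from $p$ to $q$ with image in $U$.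 A neighborhood $U$ is causally closed if whenever $p_n\le_U q_n$ with $p_n\to p\in U$, $q_n\to q\in U$, then $p\le_U q$; the space is locally causally closed if every point has a causally closed neighborhood. The space is localizable if every $x$ has a neighborhood $\Omega_x$ such that: (i) all causal curves contained in $\Omega_x$ have uniformly bounded $d$-length; (ii) there is a continuous $\omega_x:\Omega_x\times\Omega_x\to[0,\infty)$ such that $(\Omega_x,d|_{\Omega_x\times\Omega_x},\ll|_{\Omega_x},\le|_{\Omega_x},\omega_x)$ is a Lorentzian pre-length space, and $I^\pm(y)\cap\Omega_x\ne\emptyset$ for every $y\in\Omega_x$; (iii) for all $p,q\in\Omega_x$ with $p<q$ there is a future causal curve $\gamma_{p,q}$ from $p$ to $q$ with $L_\tau(\gamma_{p,q})\ge L_\tau(\gamma)$ for every future causal curve $\gamma\subset\Omega_x$ from $p$ to $q$, and $L_\tau(\gamma_{p,q})=\omega_x(p,q)$. A Lorentzian length space is a causally path connected, locally causally closed, localizable Lorentzian pre-length space with $\tau(x,y)=\sup\{L_\tau(\gamma):\gamma$ a future causal curve from $x$ to $y\}$. Causality notions: $K^+\subset X\times X$ is the smallest relation that is transitive, closed in $X\times X$, and contains $J^+=\{(x,y):x\le y\}$; stably causal means $K^+$ is antisymmetric. The Alexandrov topology is the topology on $X$ with subbase $\{I^+(x)\cap I^-(y): x,y\in X\}$; strongly causal means the Alexandrov topology coincides with the metric topology of $d$. *)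

theory Defs
  imports "HOL-Analysis.Analysis"
begin

text \<open>The metric space (X,d) is the type 'a of class
metric_space (X = UNIV, d = dist).\<close>

definition causal_space_on :: "'a set \<Rightarrow> ('a \<Rightarrow> 'a \<Rightarrow> bool) \<Rightarrow> ('a \<Rightarrow> 'a \<Rightarrow> bool) \<Rightarrow> bool" where
  "causal_space_on S ll le \<longleftrightarrow>
     (\<forall>x\<in>S. \<forall>y\<in>S. \<forall>z\<in>S. ll x y \<longrightarrow> ll y z \<longrightarrow> ll x z) \<and>
     (\<forall>x\<in>S. \<forall>y\<in>S. \<forall>z\<in>S. le x y \<longrightarrow> le y z \<longrightarrow> le x z) \<and>
     (\<forall>x\<in>S. le x x) \<and>
     (\<forall>x\<in>S. \<forall>y\<in>S. ll x y \<longrightarrow> le x y)"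

definition lsc_on :: "'b::topological_space set \<Rightarrow> ('b \<Rightarrow> ennreal) \<Rightarrow> bool" where
  "lsc_on S f \<longleftrightarrow> (\<forall>z\<in>S. \<forall>c. c < f z \<longrightarrow> (\<forall>\<^sub>F w in nhds z. w \<in> S \<longrightarrow> c < f w))"

definition lpls_on :: "'a::metric_space set \<Rightarrow> ('a \<Rightarrow> 'a \<Rightarrow> bool) \<Rightarrow> ('a \<Rightarrow> 'a \<Rightarrow> bool)
    \<Rightarrow> ('a \<Rightarrow> 'a \<Rightarrow> ennreal) \<Rightarrow> bool" where
  "lpls_on S ll le tau \<longleftrightarrow>
     causal_space_on S ll le \<and>
     lsc_on (S \<times> S) (\<lambda>(x, y). tau x y) \<and>
     (\<forall>x\<in>S. \<forall>y\<in>S. \<forall>z\<in>S. le x y \<longrightarrow> le y z \<longrightarrow> tau x y + tau y z \<le> tau x z) \<and>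
     (\<forall>x\<in>S. \<forall>y\<in>S. \<not> le x y \<longrightarrow> tau x y = 0) \<and>
     (\<forall>x\<in>S. \<forall>y\<in>S. 0 < tau x y \<longleftrightarrow> ll x y)"

definition lip_curve :: "(real \<Rightarrow> 'a::metric_space) \<Rightarrow> real set \<Rightarrow> bool" where
  "lip_curve \<gamma> I \<longleftrightarrow> is_interval I \<and> (\<exists>s\<in>I. \<exists>t\<in>I. \<gamma> s \<noteq> \<gamma> t) \<and> (\<exists>C. lipschitz_on C I \<gamma>)"

definition fd_causal :: "('a \<Rightarrow> 'a \<Rightarrow> bool) \<Rightarrow> (real \<Rightarrow> 'a::metric_space) \<Rightarrow> real set \<Rightarrow> bool" where
  "fd_causal le \<gamma> I \<longleftrightarrow> lip_curve \<gamma> I \<and> (\<forall>s\<in>I. \<forall>t\<in>I. s < t \<longrightarrow> le (\<gamma> s) (\<gamma> t))"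

definition fd_timelike :: "('a \<Rightarrow> 'a \<Rightarrow> bool) \<Rightarrow> (real \<Rightarrow> 'a::metric_space) \<Rightarrow> real set \<Rightarrow> bool" where
  "fd_timelike ll \<gamma> I \<longleftrightarrow> lip_curve \<gamma> I \<and> (\<forall>s\<in>I. \<forall>t\<in>I. s < t \<longrightarrow> ll (\<gamma> s) (\<gamma> t))"

definition causal_from_to :: "('a \<Rightarrow> 'a \<Rightarrow> bool) \<Rightarrow> (real \<Rightarrow> 'a::metric_space) \<Rightarrow> real \<Rightarrow> real \<Rightarrow> 'a \<Rightarrow> 'a \<Rightarrow> bool" where
  "causal_from_to le \<gamma> a b x y \<longleftrightarrow> a < b \<and> fd_causal le \<gamma> {a..b} \<and> \<gamma> a = x \<and> \<gamma> b = y"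

definition timelike_from_to :: "('a \<Rightarrow> 'a \<Rightarrow> bool) \<Rightarrow> (real \<Rightarrow> 'a::metric_space) \<Rightarrow> real \<Rightarrow> real \<Rightarrow> 'a \<Rightarrow> 'a \<Rightarrow> bool" where
  "timelike_from_to ll \<gamma> a b x y \<longleftrightarrow> a < b \<and> fd_timelike ll \<gamma> {a..b} \<and> \<gamma> a = x \<and> \<gamma> b = y"

definition is_partition :: "real \<Rightarrow> real \<Rightarrow> (nat \<Rightarrow> real) \<Rightarrow> nat \<Rightarrow> bool" where
  "is_partition a b t N \<longleftrightarrow> 0 < N \<and> t 0 = a \<and> t N = b \<and> (\<forall>i<N. t i < t (Suc i))"

definition L_tau :: "('a \<Rightarrow> 'a \<Rightarrow> ennreal) \<Rightarrow> (real \<Rightarrow> 'a) \<Rightarrow> real \<Rightarrow> real \<Rightarrow> ennreal" where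
  "L_tau tau \<gamma> a b = (INF p \<in> {(t, N). is_partition a b t N}.
      (\<Sum>i<snd p. tau (\<gamma> (fst p i)) (\<gamma> (fst p (Suc i)))))"

definition d_length :: "(real \<Rightarrow> 'a::metric_space) \<Rightarrow> real set \<Rightarrow> ennreal" where
  "d_length \<gamma> I = (SUP p \<in> {(t, N). (\<forall>i\<le>N. t i \<in> I) \<and> (\<forall>i<N. t i < t (Suc i))}.
      ennreal (\<Sum>i<snd p. dist (\<gamma> (fst p i)) (\<gamma> (fst p (Suc i)))))"

definition causally_path_connected :: "('a \<Rightarrow> 'a \<Rightarrow> bool) \<Rightarrow> ('a::metric_space \<Rightarrow> 'a \<Rightarrow> bool) \<Rightarrow> bool" where
  "causally_path_connected ll le \<longleftrightarrow>
     (\<forall>x y. le x y \<and> x \<noteq> y \<longrightarrow> (\<exists>\<gamma> a b. causal_from_to le \<gamma> a b x y)) \<and>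
     (\<forall>x y. ll x y \<longrightarrow> (\<exists>\<gamma> a b. timelike_from_to ll \<gamma> a b x y))"

definition le_in :: "('a \<Rightarrow> 'a \<Rightarrow> bool) \<Rightarrow> 'a::metric_space set \<Rightarrow> 'a \<Rightarrow> 'a \<Rightarrow> bool" where
  "le_in le U p q \<longleftrightarrow> p = q \<or> (\<exists>\<gamma> a b. causal_from_to le \<gamma> a b p q \<and> \<gamma> ` {a..b} \<subseteq> U)"

definition causally_closed :: "('a \<Rightarrow> 'a \<Rightarrow> bool) \<Rightarrow> 'a::metric_space set \<Rightarrow> bool" where
  "causally_closed le U \<longleftrightarrow> open U \<and>
     (\<forall>pn qn p q. (\<forall>n. le_in le U (pn n) (qn n)) \<and> pn \<longlonglongrightarrow> p \<and> qn \<longlonglongrightarrow> q \<and> p \<in> U \<and> q \<in> U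
        \<longrightarrow> le_in le U p q)"

definition locally_causally_closed :: "('a::metric_space \<Rightarrow> 'a \<Rightarrow> bool) \<Rightarrow> bool" where
  "locally_causally_closed le \<longleftrightarrow> (\<forall>x. \<exists>U. x \<in> U \<and> causally_closed le U)"

definition is_nbhd :: "'a::topological_space set \<Rightarrow> 'a \<Rightarrow> bool" where
  "is_nbhd N x \<longleftrightarrow> (\<exists>U. open U \<and> x \<in> U \<and> U \<subseteq> N)"

definition localizable :: "('a \<Rightarrow> 'a \<Rightarrow> bool) \<Rightarrow> ('a \<Rightarrow> 'a \<Rightarrow> bool) \<Rightarrow> ('a::metric_space \<Rightarrow> 'a \<Rightarrow> ennreal) \<Rightarrow> bool" where
  "localizable ll le tau \<longleftrightarrow> (\<forall>x. \<exists>\<Omega> (\<omega> :: 'a \<Rightarrow> 'a \<Rightarrow> real).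
     is_nbhd \<Omega> x \<and>
     (\<exists>C::real. \<forall>\<gamma> I. fd_causal le \<gamma> I \<and> \<gamma> ` I \<subseteq> \<Omega> \<longrightarrow> d_length \<gamma> I \<le> ennreal C) \<and>
     continuous_on (\<Omega> \<times> \<Omega>) (\<lambda>(p, q). \<omega> p q) \<and>
     (\<forall>p\<in>\<Omega>. \<forall>q\<in>\<Omega>. 0 \<le> \<omega> p q) \<and>
     lpls_on \<Omega> ll le (\<lambda>p q. ennreal (\<omega> p q)) \<and>
     (\<forall>y\<in>\<Omega>. (\<exists>z\<in>\<Omega>. ll y z) \<and> (\<exists>z\<in>\<Omega>. ll z y)) \<and>
     (\<forall>p\<in>\<Omega>. \<forall>q\<in>\<Omega>. le p q \<and> p \<noteq> q \<longrightarrow>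
        (\<exists>\<gamma> a b. causal_from_to le \<gamma> a b p q \<and> L_tau tau \<gamma> a b = ennreal (\<omega> p q) \<and>
           (\<forall>\<gamma>' a' b'. causal_from_to le \<gamma>' a' b' p q \<and> \<gamma>' ` {a'..b'} \<subseteq> \<Omega> \<longrightarrow>
              L_tau tau \<gamma>' a' b' \<le> L_tau tau \<gamma> a b))))"

definition lorentzian_length_space :: "('a \<Rightarrow> 'a \<Rightarrow> bool) \<Rightarrow> ('a \<Rightarrow> 'a \<Rightarrow> bool) \<Rightarrow> ('a::metric_space \<Rightarrow> 'a \<Rightarrow> ennreal) \<Rightarrow> bool" where
  "lorentzian_length_space ll le tau \<longleftrightarrow>
     lpls_on UNIV ll le tau \<and> causally_path_connected ll le \<and> locally_causally_closed le \<and>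
     localizable ll le tau \<and>
     (\<forall>x y. tau x y = (SUP c \<in> {(\<gamma>, a, b). causal_from_to le \<gamma> a b x y}.
                          L_tau tau (fst c) (fst (snd c)) (snd (snd c))))"

definition Kplus :: "('a::topological_space \<Rightarrow> 'a \<Rightarrow> bool) \<Rightarrow> ('a \<times> 'a) set" where
  "Kplus le = \<Inter> {R. trans R \<and> closed R \<and> {(x, y). le x y} \<subseteq> R}"

definition stably_causal :: "('a::topological_space \<Rightarrow> 'a \<Rightarrow> bool) \<Rightarrow> bool" where
  "stably_causal le \<longleftrightarrow> antisym (Kplus le)"

definition alexandrov_topology :: "('a \<Rightarrow> 'a \<Rightarrow> bool) \<Rightarrow> 'a topology" where
  "alexandrov_topology ll = topology_generated_by {{y. ll x y} \<inter> {y. ll y z} | x z. True}"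

definition strongly_causal :: "('a::topological_space \<Rightarrow> 'a \<Rightarrow> bool) \<Rightarrow> bool" where
  "strongly_causal ll \<longleftrightarrow> alexandrov_topology ll = euclidean"

end

theory Submission
  imports Defs
begin

(* Lower semicontinuity of tau makes the timelike diamonds I(p,q) open, so strong causality
  amounts to every x having diamonds inside arbitrarily small balls around it. Timelike points
  p_n << x << q_n converging to x exist: localizability gives some timelike past and future point
  of x, and the timelike curves joining them to x stay close to x near their ends. If the
  diamonds I(p_n,q_n) all left a ball around x with compact boundary sphere, timelike curves
  inside them would cross the sphere in points r_n with p_n <= r_n <= q_n. A limit r of the r_n
  then satisfies (x,r), (r,x) in the closed relation K^+, so r = x by stable causality, which
  is impossible for a point of the sphere. *)

lemma open_superlevel_set_if_lsc:
  assumes "lsc_on UNIV f"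
  shows "open {z. c < f z}"
proof (rule open_subopen[THEN iffD2], intro ballI)
  fix z assume "z \<in> {z. c < f z}"
  then have "\<forall>\<^sub>F w in nhds z. c < f w"
    using assms unfolding lsc_on_def by auto
  then show "\<exists>T. open T \<and> z \<in> T \<and> T \<subseteq> {z. c < f z}"
    unfolding eventually_nhds by auto
qed

lemma open_timelike_relation:
  assumes "lpls_on UNIV ll le tau"
  shows "open {(x, y). ll x y}"
proof -
  have lsc: "lsc_on UNIV (\<lambda>(x, y). tau x y)" and pos: "\<And>x y. 0 < tau x y \<longleftrightarrow> ll x y"
    using assms unfolding lpls_on_def by auto
  have "open {z. 0 < (\<lambda>(x, y). tau x y) z}"
    using lsc by (rule open_superlevel_set_if_lsc)
  also have "{z. 0 < (\<lambda>(x, y). tau x y) z} = {(x, y). ll x y}"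
    using pos by auto
  finally show ?thesis .
qed

lemma open_timelike_future_past:
  assumes "lpls_on UNIV ll le tau"
  shows "open {y. ll x y}" and "open {y. ll y x}"
proof -
  have rel: "open {(x, y). ll x y}"
    using assms by (rule open_timelike_relation)
  have "open ((\<lambda>y. (x, y)) -` {(x, y). ll x y})"
    by (intro continuous_open_vimage rel) (auto intro: continuous_intros)
  then show "open {y. ll x y}" by simp
  have "open ((\<lambda>y. (y, x)) -` {(x, y). ll x y})"
    by (intro continuous_open_vimage rel) (auto intro: continuous_intros)
  then show "open {y. ll y x}" by simp
qed

lemma continuous_on_Icc_approach:
  fixes \<gamma> :: "real \<Rightarrow> 'a::metric_space"
  assumes "continuous_on {a..b} \<gamma>" "a < b" "0 < \<delta>" "t\<^sub>0 \<in> {a..b}"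
  shows "\<exists>t\<in>{a..b}. t \<noteq> t\<^sub>0 \<and> dist (\<gamma> t) (\<gamma> t\<^sub>0) < \<delta>"
proof -
  have "\<forall>\<^sub>F t in at t\<^sub>0 within {a..b}. dist (\<gamma> t) (\<gamma> t\<^sub>0) < \<delta>"
    using assms(1,3,4) unfolding continuous_on_def by (auto dest: tendstoD)
  then obtain d where "0 < d"
    and d: "\<And>t. t \<in> {a..b} \<Longrightarrow> t \<noteq> t\<^sub>0 \<Longrightarrow> dist t t\<^sub>0 < d \<Longrightarrow> dist (\<gamma> t) (\<gamma> t\<^sub>0) < \<delta>"
    unfolding eventually_at by blast
  moreover have "t\<^sub>0 islimpt {a..b}"
    using assms(2,4) by simp
  ultimately obtain t where "t \<in> {a..b}" "t \<noteq> t\<^sub>0" "dist t t\<^sub>0 < d"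
    unfolding islimpt_approachable by blast
  with d show ?thesis by blast
qed

lemma timelike_curve_continuous:
  assumes "timelike_from_to ll \<gamma> a b x y"
  shows "continuous_on {a..b} \<gamma>"
  using assms unfolding timelike_from_to_def fd_timelike_def lip_curve_def
  by (auto intro: lipschitz_on_continuous_on)

lemma timelike_future_near:
  fixes x :: "'a::metric_space"
  assumes "causally_path_connected ll le" "ll x z" "0 < \<delta>"
  shows "\<exists>y. ll x y \<and> dist y x < \<delta>"
proof -
  obtain \<gamma> a b where \<gamma>: "timelike_from_to ll \<gamma> a b x z"
    using assms(1,2) unfolding causally_path_connected_def by blast
  then have "a < b" "\<gamma> a = x"
    and tl: "\<And>s t. s \<in> {a..b} \<Longrightarrow> t \<in> {a..b} \<Longrightarrow> s < t \<Longrightarrow> ll (\<gamma> s) (\<gamma> t)"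
    unfolding timelike_from_to_def fd_timelike_def by auto
  moreover obtain t where "t \<in> {a..b}" "t \<noteq> a" "dist (\<gamma> t) (\<gamma> a) < \<delta>"
    using continuous_on_Icc_approach[OF timelike_curve_continuous[OF \<gamma>] \<open>a < b\<close> assms(3), of a]
      \<open>a < b\<close> by auto
  ultimately show ?thesis
    using tl[of a t] by auto
qed

lemma timelike_past_near:
  fixes x :: "'a::metric_space"
  assumes "causally_path_connected ll le" "ll z x" "0 < \<delta>"
  shows "\<exists>y. ll y x \<and> dist y x < \<delta>"
proof -
  obtain \<gamma> a b where \<gamma>: "timelike_from_to ll \<gamma> a b z x"
    using assms(1,2) unfolding causally_path_connected_def by blast
  then have "a < b" "\<gamma> b = x"
    and tl: "\<And>s t. s \<in> {a..b} \<Longrightarrow> t \<in> {a..b} \<Longrightarrow> s < t \<Longrightarrow> ll (\<gamma> s) (\<gamma> t)"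
    unfolding timelike_from_to_def fd_timelike_def by auto
  moreover obtain t where "t \<in> {a..b}" "t \<noteq> b" "dist (\<gamma> t) (\<gamma> b) < \<delta>"
    using continuous_on_Icc_approach[OF timelike_curve_continuous[OF \<gamma>] \<open>a < b\<close> assms(3), of b]
      \<open>a < b\<close> by auto
  ultimately show ?thesis
    using tl[of t b] by auto
qed

lemma lorentzian_length_space_timelike_near:
  fixes x :: "'a::metric_space"
  assumes "lorentzian_length_space ll le tau" "0 < \<delta>"
  shows "\<exists>q. ll x q \<and> dist q x < \<delta>" and "\<exists>p. ll p x \<and> dist p x < \<delta>"
proof -
  have cpc: "causally_path_connected ll le" and "localizable ll le tau"
    using assms(1) unfolding lorentzian_length_space_def by auto
  then obtain \<Omega> :: "'a set" where "is_nbhd \<Omega> x"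
    and "\<forall>y\<in>\<Omega>. (\<exists>z\<in>\<Omega>. ll y z) \<and> (\<exists>z\<in>\<Omega>. ll z y)"
    unfolding localizable_def by meson
  then obtain z w where "ll x z" "ll w x"
    unfolding is_nbhd_def by blast
  then show "\<exists>q. ll x q \<and> dist q x < \<delta>" and "\<exists>p. ll p x \<and> dist p x < \<delta>"
    using timelike_future_near[OF cpc _ assms(2)] timelike_past_near[OF cpc _ assms(2)] by blast+
qed

lemma timelike_curve_crosses_sphere:
  fixes x :: "'a::metric_space"
  assumes "causal_space_on UNIV ll le" "timelike_from_to ll \<gamma> a b p y"
    and "dist x p < \<epsilon>" "\<epsilon> \<le> dist x y"
  shows "\<exists>r\<in>sphere x \<epsilon>. le p r \<and> le r y"
proof -
  have ab: "a < b" and "\<gamma> a = p" "\<gamma> b = y"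
    and tl: "\<And>s t. s \<in> {a..b} \<Longrightarrow> t \<in> {a..b} \<Longrightarrow> s < t \<Longrightarrow> ll (\<gamma> s) (\<gamma> t)"
    using assms(2) unfolding timelike_from_to_def fd_timelike_def by auto
  have ll_le: "\<And>u v. ll u v \<Longrightarrow> le u v" and refl: "\<And>u. le u u"
    using assms(1) unfolding causal_space_on_def by blast+
  have "continuous_on {a..b} (\<lambda>t. dist x (\<gamma> t))"
    using timelike_curve_continuous[OF assms(2)] by (intro continuous_intros)
  then obtain t where t: "a \<le> t" "t \<le> b" "dist x (\<gamma> t) = \<epsilon>"
    using IVT'[of "\<lambda>t. dist x (\<gamma> t)" a \<epsilon> b] ab assms(3,4) \<open>\<gamma> a = p\<close> \<open>\<gamma> b = y\<close> by auto
  moreover have "t \<noteq> a"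
    using t(3) assms(3) \<open>\<gamma> a = p\<close> by auto
  ultimately have "a < t"
    by simp
  then have "le p (\<gamma> t)"
    using tl[of a t] t ll_le \<open>\<gamma> a = p\<close> by auto
  moreover have "le (\<gamma> t) y"
    using tl[of t b] t ll_le refl \<open>\<gamma> b = y\<close> by (cases "t < b") auto
  ultimately show ?thesis
    using t by auto
qed

lemma closed_antisym_relation_squeeze:
  fixes x :: "'a::metric_space"
  assumes "closed K" "antisym K" "compact C" "x \<notin> C"
    and "P \<longlonglongrightarrow> x" "Q \<longlonglongrightarrow> x"
    and "\<And>n. R n \<in> C" "\<And>n. (P n, R n) \<in> K" "\<And>n. (R n, Q n) \<in> K"
  shows False
proof -
  have "\<forall>n. R n \<in> C"
    using assms(7) by simp
  then obtain l \<sigma> where "l \<in> C" "strict_mono \<sigma>" and l: "(R \<circ> \<sigma>) \<longlonglongrightarrow> l"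
    by (rule seq_compactE[OF compact_imp_seq_compact[OF assms(3)]])
  have "(\<lambda>n. ((P \<circ> \<sigma>) n, (R \<circ> \<sigma>) n)) \<longlonglongrightarrow> (x, l)"
    by (intro tendsto_Pair LIMSEQ_subseq_LIMSEQ[OF assms(5) \<open>strict_mono \<sigma>\<close>] l)
  then have "(x, l) \<in> K"
    by (rule closed_sequentially[OF assms(1), rotated]) (simp add: assms(8))
  moreover have "(\<lambda>n. ((R \<circ> \<sigma>) n, (Q \<circ> \<sigma>) n)) \<longlonglongrightarrow> (l, x)"
    by (intro tendsto_Pair LIMSEQ_subseq_LIMSEQ[OF assms(6) \<open>strict_mono \<sigma>\<close>] l)
  then have "(l, x) \<in> K"
    by (rule closed_sequentially[OF assms(1), rotated]) (simp add: assms(9))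
  ultimately have "x = l"
    by (rule antisymD[OF assms(2)])
  with \<open>l \<in> C\<close> assms(4) show False
    by simp
qed

lemma causal_detour_if_diamond_leaves_ball:
  fixes x :: "'a::metric_space"
  assumes "causal_space_on UNIV ll le" "causally_path_connected ll le"
    and "dist p x < \<epsilon>" "\<not> {y. ll p y \<and> ll y q} \<subseteq> ball x \<epsilon>"
  shows "\<exists>r\<in>sphere x \<epsilon>. le p r \<and> le r q"
proof -
  have ll_le: "\<And>u v. ll u v \<Longrightarrow> le u v" and trans: "\<And>u v w. le u v \<Longrightarrow> le v w \<Longrightarrow> le u w"
    using assms(1) unfolding causal_space_on_def by blast+
  obtain y where y: "ll p y" "ll y q" "\<epsilon> \<le> dist x y"
    using assms(4) by (auto simp: subset_iff not_less)
  obtain \<gamma> a b where \<gamma>: "timelike_from_to ll \<gamma> a b p y"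
    using assms(2) y(1) unfolding causally_path_connected_def by blast
  have "dist x p < \<epsilon>"
    using assms(3) by (simp add: dist_commute)
  then obtain r where "r \<in> sphere x \<epsilon>" "le p r" "le r y"
    using timelike_curve_crosses_sphere[OF assms(1) \<gamma> _ y(3)] by blast
  moreover have "le r q"
    using trans[OF \<open>le r y\<close> ll_le[OF y(2)]] .
  ultimately show ?thesis
    by blast
qed

lemma small_timelike_diamond:
  fixes x :: "'a::metric_space"
  assumes L: "lorentzian_length_space ll le tau"
    and K: "closed K" "antisym K" "\<And>u v. le u v \<Longrightarrow> (u, v) \<in> K"
    and "0 < \<epsilon>" "compact (sphere x \<epsilon>)"
  shows "\<exists>p q. ll p x \<and> ll x q \<and> {y. ll p y \<and> ll y q} \<subseteq> ball x \<epsilon>"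
proof (rule ccontr)
  assume no_diamond: "\<not> ?thesis"
  have cs: "causal_space_on UNIV ll le" and cpc: "causally_path_connected ll le"
    using L unfolding lorentzian_length_space_def lpls_on_def by simp_all
  have "\<exists>p q r. dist p x < 1 / real (Suc n) \<and> dist q x < 1 / real (Suc n)
      \<and> r \<in> sphere x \<epsilon> \<and> le p r \<and> le r q" for n
  proof -
    have "0 < min \<epsilon> (1 / real (Suc n))"
      using \<open>0 < \<epsilon>\<close> by simp
    then obtain p q where p: "ll p x" "dist p x < min \<epsilon> (1 / real (Suc n))"
      and q: "ll x q" "dist q x < min \<epsilon> (1 / real (Suc n))"
      using lorentzian_length_space_timelike_near[OF L] by blast
    have "\<not> {y. ll p y \<and> ll y q} \<subseteq> ball x \<epsilon>"
      using no_diamond p(1) q(1) by blast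
    moreover have "dist p x < \<epsilon>"
      using p(2) by simp
    ultimately obtain r where "r \<in> sphere x \<epsilon>" "le p r" "le r q"
      using causal_detour_if_diamond_leaves_ball[OF cs cpc] by blast
    with p(2) q(2) show ?thesis
      by auto
  qed
  then obtain P Q R where PQR: "\<And>n. dist (P n) x < 1 / real (Suc n) \<and> dist (Q n) x < 1 / real (Suc n)
      \<and> R n \<in> sphere x \<epsilon> \<and> le (P n) (R n) \<and> le (R n) (Q n)"
    by metis
  have "(\<lambda>n. dist (P n) x) \<longlonglongrightarrow> 0" "(\<lambda>n. dist (Q n) x) \<longlonglongrightarrow> 0"
    using PQR by (auto intro: LIMSEQ_norm_0)
  then have "P \<longlonglongrightarrow> x" "Q \<longlonglongrightarrow> x"
    by (auto intro: tendsto_dist_iff[THEN iffD2])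
  moreover have "x \<notin> sphere x \<epsilon>"
    using \<open>0 < \<epsilon>\<close> by simp
  ultimately show False
    using closed_antisym_relation_squeeze[OF K(1,2) \<open>compact (sphere x \<epsilon>)\<close>] PQR K(3) by blast
qed

lemma topology_generated_by_open_base:
  assumes "\<And>B. B \<in> \<B> \<Longrightarrow> openin X B"
    and "\<And>U x. openin X U \<Longrightarrow> x \<in> U \<Longrightarrow> \<exists>B\<in>\<B>. x \<in> B \<and> B \<subseteq> U"
  shows "topology_generated_by \<B> = X"
proof -
  have "generate_topology_on \<B> U \<longleftrightarrow> openin X U" for U
  proof
    assume "generate_topology_on \<B> U"
    then show "openin X U"
      using generate_topology_on_coarsest[of "openin X" \<B> U] assms(1) by simp
  next
    assume "openin X U"
    have "U = \<Union>{B \<in> \<B>. B \<subseteq> U}"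
      using assms(2)[OF \<open>openin X U\<close>] by auto
    moreover have "generate_topology_on \<B> (\<Union>{B \<in> \<B>. B \<subseteq> U})"
      by (intro generate_topology_on.UN generate_topology_on.Basis) auto
    ultimately show "generate_topology_on \<B> U"
      by simp
  qed
  then show ?thesis
    by (simp add: topology_eq openin_topology_generated_by_iff)
qed

lemma locally_compact_space_small_spheres_compact:
  fixes x :: "'a::metric_space"
  assumes "locally_compact_space (euclidean :: 'a topology)"
  obtains e where "0 < e" "\<And>\<epsilon>. \<epsilon> \<le> e \<Longrightarrow> compact (sphere x \<epsilon>)"
proof -
  have "\<exists>U C. open U \<and> compact C \<and> x \<in> U \<and> U \<subseteq> C"
    using assms unfolding locally_compact_space_def by simp
  then obtain U C where "open U" "compact C" "x \<in> U" "U \<subseteq> C"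
    by blast
  then obtain e where "0 < e" "cball x e \<subseteq> C"
    by (meson open_contains_cball_eq order_trans)
  have "compact (sphere x \<epsilon>)" if "\<epsilon> \<le> e" for \<epsilon>
  proof -
    have "sphere x \<epsilon> = cball x \<epsilon> - ball x \<epsilon>"
      by auto
    then have "compact (C \<inter> sphere x \<epsilon>)"
      using \<open>compact C\<close> by (simp add: compact_Int_closed closed_Diff)
    moreover have "sphere x \<epsilon> \<subseteq> C"
      using that \<open>cball x e \<subseteq> C\<close> by auto
    ultimately show ?thesis
      by (simp add: Int_absorb1)
  qed
  with \<open>0 < e\<close> show thesis
    using that by blast
qed

lemma closed_Kplus: "closed (Kplus le)"
  unfolding Kplus_def by (rule closed_Inter) auto

lemma causal_subset_Kplus: "le u v \<Longrightarrow> (u, v) \<in> Kplus le"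
  unfolding Kplus_def by auto

theorem proposition3p15:
  fixes ll le :: "'a::metric_space \<Rightarrow> 'a \<Rightarrow> bool" and tau :: "'a \<Rightarrow> 'a \<Rightarrow> ennreal"
  assumes "lorentzian_length_space ll le tau"
    and "locally_compact_space (euclidean :: 'a topology)"
    and "stably_causal le"
  shows "strongly_causal ll"
  unfolding strongly_causal_def alexandrov_topology_def
proof (rule topology_generated_by_open_base)
  have "lpls_on UNIV ll le tau"
    using assms(1) unfolding lorentzian_length_space_def by simp
  then show "openin euclidean B" if "B \<in> {{y. ll p y} \<inter> {y. ll y q} | p q. True}" for B
    using that open_timelike_future_past by fastforce
next
  fix U and x :: 'a
  assume "openin euclidean U" "x \<in> U"
  then obtain e' where "0 < e'" "ball x e' \<subseteq> U"
    unfolding open_openin[symmetric] open_contains_ball by blast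
  obtain e where "0 < e" and spheres: "\<And>\<epsilon>. \<epsilon> \<le> e \<Longrightarrow> compact (sphere x \<epsilon>)"
    using locally_compact_space_small_spheres_compact[OF assms(2)] by blast
  have "antisym (Kplus le)"
    using assms(3) unfolding stably_causal_def .
  moreover have "0 < min e e'" "compact (sphere x (min e e'))"
    using \<open>0 < e\<close> \<open>0 < e'\<close> spheres by auto
  ultimately obtain p q where "ll p x" "ll x q" "{y. ll p y \<and> ll y q} \<subseteq> ball x (min e e')"
    using small_timelike_diamond[OF assms(1) closed_Kplus _ causal_subset_Kplus] by blast
  moreover have "ball x (min e e') \<subseteq> U"
    using \<open>ball x e' \<subseteq> U\<close> by auto
  ultimately show "\<exists>B\<in>{{y. ll p y} \<inter> {y. ll y q} | p q. True}. x \<in> B \<and> B \<subseteq> U"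
    by blast
qed

end
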